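(* Let $S$ and $T$ be valid configurations and $M:S\to T$ a bijection. Let $A=(A^S,A^T)$ and $B=(B^S,B^T)$ be two distinct pairs of $M$. Define $$\mathcal V^{(1)}_{AB}=\{\vec v\in\mathbb R^2 : D(A^S)\cap H_{\vec v}(B)\neq\emptyset\},\qquad \mathcal V^{(2)}_{AB}=\{\vec v\in\mathbb R^2 : D(B^T+\vec v)\cap H_{\vec v}(A)\neq\emptyset\}.$$ Then $$\mathcal V^{(1)}_{AB}=\bigl(W(A^S,B^S)\oplus D_2(o)\bigr)-B^T,\qquad \mathcal V^{(2)}_{AB}=\bigl(-W(B^T,A^T)\bigr)\oplus D_2(o)+A^S,$$ where $\oplus$ denotes Minkowski sum, $-X=\{-x:x\in X\}$, and $X+p=\{x+p:x\in X\}$.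
   Context: For $p\in\mathbb R^2$, $D(p)$ is the open unit disc centered at $p$ and $D_2(p)$ is the open disc of radius $2$ centered at $p$; $o$ is the origin. A configuration is a finite set of points in $\mathbb R^2$; it is valid if any two distinct points of it are at distance at least $2$. A pair of the bijection $M$ is $A=(A^S,A^T)$ with $A^S\in S$, $A^T=M(A^S)$. For a translation $\vec v\in\mathbb R^2$, the hippodrome $H_{\vec v}(A)$ is the convex hull of $D(A^S)\cup D(A^T+\vec v)$ (the region swept by a unit disc translated along the segment from $A^S$ to $A^T+\vec v$). For two points $a,b$ with $|a-b|\ge 2$, the wedge $W(a,b)$ is the closed wedge with apex $a$ whose bounding rays are parallel to, and directed like, the two common inner tangents of $D(b)$ and $D(a)$ directed from $b$ towards $a$; explicitly, $W(a,b)=\{a\}\cup\{a+w: w\neq 0,\ \angle(w,a-b)\le \arcsin(2/|a-b|)\}$, where $\angle(w,u)\in[0,\pi]$ is the angle between vectors $w$ and $u$. *)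

theory Defs
  imports "HOL-Analysis.Analysis"
begin

type_synonym point = "real ^ 2"

definition valid_config :: "point set \<Rightarrow> bool" where
  "valid_config C \<longleftrightarrow> finite C \<and> (\<forall>p\<in>C. \<forall>q\<in>C. p \<noteq> q \<longrightarrow> dist p q \<ge> 2)"

definition D :: "point \<Rightarrow> point set" where "D p = ball p 1"
definition D2 :: "point \<Rightarrow> point set" where "D2 p = ball p 2"

definition hippodrome :: "point \<Rightarrow> point \<Rightarrow> point \<Rightarrow> point set" where
  "hippodrome AS AT v = convex hull (D AS \<union> D (AT + v))"

definition vec_angle :: "point \<Rightarrow> point \<Rightarrow> real" where
  "vec_angle w u = arccos ((w \<bullet> u) / (norm w * norm u))"

definition wedge :: "point \<Rightarrow> point \<Rightarrow> point set" where
  "wedge a b = {a} \<union> {a + w | w. w \<noteq> 0 \<and> vec_angle w (a - b) \<le> arcsin (2 / dist a b)}"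

definition minkowski_sum :: "point set \<Rightarrow> point set \<Rightarrow> point set" where
  "minkowski_sum X Y = {x + y | x y. x \<in> X \<and> y \<in> Y}"

end

theory Submission
  imports Defs
begin

text \<open>The hippodrome is the segment from A^S to A^T + v thickened by the open unit disc,
  so D(a) meets it iff the segment passes within distance 2 of a.  For a segment starting
  at b with |a - b| \<ge> 2 this happens iff its endpoint lies in W(a, b) \<oplus> D_2(o), because
  the wedge is the translate to a of the cone of directions from b into the closed disc of
  radius 2 around a.  The second set is the first one for the reversed segment, after
  translating everything by -v.\<close>

lemma convex_hull_union_balls:
  fixes b p :: "'a::real_normed_vector"
  shows "convex hull (ball b r \<union> ball p r) = closed_segment b p + ball 0 r"
proof -
  have "ball b r \<union> ball p r = {b, p} + ball 0 r"
    by (simp add: insert_set_plus image_add_ball Un_commute flip: translation_eq_singleton_plus)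
  then show ?thesis
    by (simp add: convex_hull_set_plus segment_convex_hull convex_hull_eq[THEN iffD2, OF convex_ball])
qed

lemma ball_meets_plus_ball_iff:
  fixes a :: "'a::real_normed_vector"
  assumes r: "r > 0" and s: "s > 0"
  shows "ball a r \<inter> (C + ball 0 s) \<noteq> {} \<longleftrightarrow> (\<exists>c\<in>C. dist a c < r + s)"
proof
  assume "ball a r \<inter> (C + ball 0 s) \<noteq> {}"
  then obtain c e where c: "c \<in> C" and e: "norm e < s" and near: "dist a (c + e) < r"
    by (auto simp: set_plus_def)
  have "dist a c \<le> dist a (c + e) + norm e"
    using dist_triangle[of a c "c + e"] by (simp add: dist_norm)
  with c e near show "\<exists>c\<in>C. dist a c < r + s" by force
next
  assume "\<exists>c\<in>C. dist a c < r + s"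
  then obtain c where c: "c \<in> C" and near: "dist a c < r + s" by blast
  \<comment> \<open>split the segment from c to a in the ratio s : r\<close>
  define e where "e = (s / (r + s)) *\<^sub>R (a - c)"
  have "norm e = s / (r + s) * dist a c" using r s by (simp add: e_def dist_norm)
  also have "\<dots> < s / (r + s) * (r + s)"
    using near r s by (intro mult_strict_left_mono) auto
  also have "\<dots> = s" using r s by simp
  finally have "c + e \<in> C + ball 0 s" using c by (auto intro: set_plus_intro)
  have "a - (c + e) = (1 - s / (r + s)) *\<^sub>R (a - c)"
    by (simp add: e_def algebra_simps)
  also have "1 - s / (r + s) = r / (r + s)" using r s by (simp add: field_simps)
  finally have "dist a (c + e) = r / (r + s) * dist a c"
    using r s by (simp add: dist_norm)
  also have "\<dots> < r / (r + s) * (r + s)"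
    using near r s by (intro mult_strict_left_mono) auto
  finally have "c + e \<in> ball a r" using r s by simp
  with \<open>c + e \<in> C + ball 0 s\<close> show "ball a r \<inter> (C + ball 0 s) \<noteq> {}" by blast
qed

lemma D_meets_hippodrome_iff:
  "D a \<inter> hippodrome b q v \<noteq> {} \<longleftrightarrow> (\<exists>c\<in>closed_segment b (q + v). dist a c < 2)"
  using ball_meets_plus_ball_iff[of 1 1 a]
  by (simp add: D_def hippodrome_def convex_hull_union_balls)

text \<open>For |g| \<ge> 2 this is the closed cone with apex 0 bounded by the tangents from 0 to
  the circle of radius 2 around g (a half-plane when |g| = 2); the wedge W(a, b) is its
  translate by a for g = a - b.\<close>
definition tangent_cone :: "'a::real_inner \<Rightarrow> 'a set" where
  "tangent_cone g = {w. norm w * sqrt ((norm g)\<^sup>2 - 4) \<le> w \<bullet> g}"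

lemma tangent_cone_scaleR:
  assumes "w \<in> tangent_cone g" and "0 \<le> c"
  shows "c *\<^sub>R w \<in> tangent_cone g"
  using mult_left_mono[OF assms[unfolded tangent_cone_def, simplified]]
  by (simp add: tangent_cone_def mult.assoc \<open>0 \<le> c\<close>)

lemma cball_subset_tangent_cone:
  fixes g :: "'a::real_inner"
  assumes g: "norm g \<ge> 2"
  shows "cball g 2 \<subseteq> tangent_cone g"
proof
  fix x assume "x \<in> cball g 2"
  then have q: "norm (x - g) \<le> 2" by (simp add: dist_norm norm_minus_commute)
  define y where "y = (x - g) \<bullet> g"
  define n where "n = (norm (x - g))\<^sup>2"
  define d where "d = norm g"
  have d2: "d \<ge> 2" using g by (simp add: d_def)
  have gg: "g \<bullet> g = d\<^sup>2" by (simp add: d_def power2_norm_eq_inner)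
  have "\<bar>y\<bar> \<le> 2 * d"
    using Cauchy_Schwarz_ineq2[of "x - g" g] mult_right_mono[OF q, of "norm g"]
    by (simp add: y_def d_def)
  moreover have "2 * d \<le> d\<^sup>2" using d2 by (simp add: power2_eq_square)
  ultimately have nonneg: "0 \<le> x \<bullet> g"
    using gg by (simp add: y_def inner_diff_left)
  have n4: "n \<le> 4" using power_mono[OF q, of 2] by (simp add: n_def)
  have d4: "d\<^sup>2 \<ge> 4" using power_mono[OF d2, of 2] by simp
  have xx: "(norm x)\<^sup>2 = n + 2 * y + d\<^sup>2"
    by (simp add: n_def y_def gg power2_norm_eq_inner inner_diff_left inner_diff_right inner_commute)
  have xg: "x \<bullet> g = y + d\<^sup>2" by (simp add: y_def gg inner_diff_left)
  \<comment> \<open>the defect of the squared inequality is a sum of nonnegative terms\<close>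
  have "(y + d\<^sup>2)\<^sup>2 - (n + 2 * y + d\<^sup>2) * (d\<^sup>2 - 4) = (y + 4)\<^sup>2 + (4 - n) * (d\<^sup>2 - 4)"
    by (simp add: algebra_simps power2_eq_square)
  moreover have "0 \<le> (4 - n) * (d\<^sup>2 - 4)" using n4 d4 by simp
  ultimately have "(n + 2 * y + d\<^sup>2) * (d\<^sup>2 - 4) \<le> (y + d\<^sup>2)\<^sup>2"
    using zero_le_power2[of "y + 4"] by linarith
  then have "(norm x * sqrt (d\<^sup>2 - 4))\<^sup>2 \<le> (x \<bullet> g)\<^sup>2"
    using d4 xx xg by (simp add: power_mult_distrib)
  then have "norm x * sqrt (d\<^sup>2 - 4) \<le> x \<bullet> g" using nonneg by (rule power2_le_imp_le)
  then show "x \<in> tangent_cone g" by (simp add: tangent_cone_def d_def)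
qed

lemma tangent_cone_near_axis:
  fixes g w :: "'a::real_inner"
  assumes g: "norm g \<ge> 2" and w: "w \<in> tangent_cone g" and \<delta>: "\<delta> > 0"
  obtains \<mu> where "\<mu> \<ge> 0" and "norm (w - \<mu> *\<^sub>R g) < 2 * \<mu> + \<delta>"
proof -
  define y where "y = w \<bullet> g"
  define d where "d = norm g"
  have d4: "d\<^sup>2 \<ge> 4" using power_mono[OF g, of 2] by (simp add: d_def)
  have wy: "norm w * sqrt (d\<^sup>2 - 4) \<le> y" using w by (simp add: tangent_cone_def y_def d_def)
  have "0 \<le> norm w * sqrt (d\<^sup>2 - 4)" using d4 by simp
  with wy have y0: "y \<ge> 0" by linarith
  have ysq: "(norm w)\<^sup>2 * (d\<^sup>2 - 4) \<le> y\<^sup>2"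
    using power_mono[OF wy, of 2] d4 by (simp add: power_mult_distrib)
  have expand: "(norm (w - \<mu> *\<^sub>R g))\<^sup>2 = (norm w)\<^sup>2 - 2 * \<mu> * y + \<mu>\<^sup>2 * d\<^sup>2" for \<mu>
    unfolding power2_norm_eq_inner y_def d_def
    by (simp add: inner_diff_left inner_diff_right inner_commute power2_eq_square algebra_simps)
  have "\<exists>\<mu>\<ge>0. (norm w)\<^sup>2 - 2 * \<mu> * y + \<mu>\<^sup>2 * d\<^sup>2 < (2 * \<mu> + \<delta>)\<^sup>2"
  proof (cases "d\<^sup>2 > 4")
    case True
    define \<mu> where "\<mu> = y / (d\<^sup>2 - 4)"
    have \<mu>0: "\<mu> \<ge> 0" using True y0 by (simp add: \<mu>_def)
    have \<mu>y: "\<mu> * (d\<^sup>2 - 4) = y" using True by (simp add: \<mu>_def)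
    have "(norm w)\<^sup>2 * (d\<^sup>2 - 4) \<le> (\<mu> * y) * (d\<^sup>2 - 4)"
      using ysq by (simp add: \<mu>y[symmetric] power2_eq_square mult_ac)
    then have "(norm w)\<^sup>2 \<le> \<mu> * y" using True by simp
    then have "(norm w)\<^sup>2 - 2 * \<mu> * y + \<mu>\<^sup>2 * d\<^sup>2 \<le> 4 * \<mu>\<^sup>2"
      using \<mu>y by (simp add: power2_eq_square algebra_simps)
    also have "\<dots> < (2 * \<mu> + \<delta>)\<^sup>2" using \<mu>0 \<delta> by (simp add: power2_eq_square algebra_simps add_pos_nonneg)
    finally show ?thesis using \<mu>0 by blast
  next
    case False
    \<comment> \<open>here the cone is the half-space of all w with 0 \<le> w \<bullet> g\<close>
    then have d4': "d\<^sup>2 = 4" using d4 by simp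
    define \<mu> where "\<mu> = (norm w)\<^sup>2 / (2 * (y + 2 * \<delta>))"
    have "y + 2 * \<delta> > 0" using y0 \<delta> by simp
    then have pos: "2 * \<mu> * (y + 2 * \<delta>) = (norm w)\<^sup>2" by (simp add: \<mu>_def field_simps)
    have \<mu>0: "\<mu> \<ge> 0" using y0 \<delta> by (simp add: \<mu>_def)
    have "(norm w)\<^sup>2 - 2 * \<mu> * y + \<mu>\<^sup>2 * d\<^sup>2
        = (2 * \<mu> + \<delta>)\<^sup>2 - \<delta>\<^sup>2 + ((norm w)\<^sup>2 - 2 * \<mu> * (y + 2 * \<delta>))"
      unfolding d4' by (simp add: power2_eq_square algebra_simps)
    also have "\<dots> = (2 * \<mu> + \<delta>)\<^sup>2 - \<delta>\<^sup>2"
      using pos by simp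
    also have "\<dots> < (2 * \<mu> + \<delta>)\<^sup>2" using \<delta> by simp
    finally show ?thesis using \<mu>0 by blast
  qed
  then obtain \<mu> where \<mu>0: "\<mu> \<ge> 0"
    and "(norm w)\<^sup>2 - 2 * \<mu> * y + \<mu>\<^sup>2 * d\<^sup>2 < (2 * \<mu> + \<delta>)\<^sup>2"
    by blast
  then have "(norm (w - \<mu> *\<^sub>R g))\<^sup>2 < (2 * \<mu> + \<delta>)\<^sup>2" by (simp only: expand)
  then have "norm (w - \<mu> *\<^sub>R g) < 2 * \<mu> + \<delta>"
    by (rule power2_less_imp_less) (use \<mu>0 \<delta> in simp)
  with \<mu>0 show thesis by (rule that)
qed

lemma vec_angle_le_arcsin_iff:
  fixes w g :: point
  assumes w: "w \<noteq> 0" and g: "norm g \<ge> 2"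
  shows "vec_angle w g \<le> arcsin (2 / norm g) \<longleftrightarrow> w \<in> tangent_cone g"
proof -
  define d where "d = norm g"
  define c where "c = (w \<bullet> g) / (norm w * d)"
  define s where "s = 2 / d"
  have d2: "d \<ge> 2" using g by (simp add: d_def)
  have nwd: "norm w * d > 0" using w d2 by simp
  have "\<bar>w \<bullet> g\<bar> \<le> norm w * d" using Cauchy_Schwarz_ineq2[of w g] by (simp add: d_def)
  then have "\<bar>c\<bar> \<le> 1" using nwd by (simp add: c_def abs_divide divide_le_eq_1_pos)
  then have c: "-1 \<le> c" "c \<le> 1" by linarith+
  have s: "0 \<le> s" "s \<le> 1" using d2 by (auto simp: s_def)
  have "vec_angle w g \<le> arcsin s \<longleftrightarrow> arccos c \<le> arcsin s"
    by (simp add: vec_angle_def c_def d_def)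
  also have "\<dots> \<longleftrightarrow> cos (arcsin s) \<le> cos (arccos c)"
    using s c arcsin_le_arcsin[of 0 s] arcsin_ubound[of s] arccos_bounded[of c]
    by (intro cos_mono_le_eq[symmetric]) auto
  also have "\<dots> \<longleftrightarrow> norm w * (d * sqrt (1 - s\<^sup>2)) \<le> w \<bullet> g"
    using s c nwd by (simp add: cos_arcsin c_def le_divide_eq mult_ac)
  also have "d * sqrt (1 - s\<^sup>2) = sqrt (d\<^sup>2 - 4)"
  proof -
    have "d\<^sup>2 * (1 - s\<^sup>2) = d\<^sup>2 - 4" using d2 by (simp add: s_def field_simps power2_eq_square)
    then show ?thesis using d2 by (metis real_sqrt_abs real_sqrt_mult abs_of_nonneg dual_order.trans zero_le_numeral)
  qed
  finally show ?thesis by (simp add: tangent_cone_def s_def d_def)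
qed

lemma wedge_iff_tangent_cone:
  assumes "dist a b \<ge> 2"
  shows "x \<in> wedge a b \<longleftrightarrow> x - a \<in> tangent_cone (a - b)"
proof (cases "x = a")
  case True
  then show ?thesis by (simp add: wedge_def tangent_cone_def)
next
  case False
  have "x \<in> wedge a b \<longleftrightarrow> vec_angle (x - a) (a - b) \<le> arcsin (2 / norm (a - b))"
    using False by (auto simp: wedge_def dist_norm intro!: exI[of _ "x - a"])
  also have "\<dots> \<longleftrightarrow> x - a \<in> tangent_cone (a - b)"
    using False assms by (intro vec_angle_le_arcsin_iff) (auto simp: dist_norm)
  finally show ?thesis .
qed

lemma segment_near_point_iff_tangent_cone:
  fixes a b p :: "'a::real_inner"
  assumes ab: "norm (a - b) \<ge> 2"
  shows "(\<exists>c\<in>closed_segment b p. dist a c < 2) \<longleftrightarrow> p - a \<in> tangent_cone (a - b) + ball 0 2"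
proof
  assume "\<exists>c\<in>closed_segment b p. dist a c < 2"
  then obtain t c where t: "0 \<le> t" "t \<le> 1" and c: "c = (1 - t) *\<^sub>R b + t *\<^sub>R p"
    and near: "dist a c < 2"
    by (auto simp: in_segment)
  have "t \<noteq> 0" using near ab c by (auto simp: dist_norm)
  have "p - c = (1 - t) *\<^sub>R (p - b)" by (simp add: c algebra_simps)
  also have "\<dots> = ((1 - t) / t) *\<^sub>R (t *\<^sub>R (p - b))" using \<open>t \<noteq> 0\<close> by simp
  also have "t *\<^sub>R (p - b) = c - b" by (simp add: c algebra_simps)
  finally have pc: "p - c = ((1 - t) / t) *\<^sub>R (c - b)" .
  have "c - b \<in> cball (a - b) 2" using near by (simp add: dist_norm)
  then have "c - b \<in> tangent_cone (a - b)" using cball_subset_tangent_cone[OF ab] by blast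
  then have "p - c \<in> tangent_cone (a - b)"
    unfolding pc using t \<open>t \<noteq> 0\<close> by (intro tangent_cone_scaleR) auto
  moreover have "c - a \<in> ball 0 2" using near by (simp add: dist_norm norm_minus_commute)
  moreover have "p - a = (p - c) + (c - a)" by simp
  ultimately show "p - a \<in> tangent_cone (a - b) + ball 0 2" by (metis set_plus_intro)
next
  assume "p - a \<in> tangent_cone (a - b) + ball 0 2"
  then obtain w z where w: "w \<in> tangent_cone (a - b)" and z: "norm z < 2" and p: "p = a + w + z"
    by (auto simp: set_plus_def algebra_simps)
  obtain \<mu> where \<mu>: "\<mu> \<ge> 0" and close: "norm (w - \<mu> *\<^sub>R (a - b)) < 2 * \<mu> + (2 - norm z)"
    using tangent_cone_near_axis[OF ab w, of "2 - norm z"] z by auto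
  define t where "t = 1 / (1 + \<mu>)"
  define c where "c = (1 - t) *\<^sub>R b + t *\<^sub>R p"
  have t: "0 \<le> t" "t \<le> 1" using \<mu> by (auto simp: t_def)
  have t\<mu>: "1 - t = t * \<mu>" using \<mu> by (simp add: t_def field_simps)
  have "c - a = t *\<^sub>R (w + z) - (1 - t) *\<^sub>R (a - b)" by (simp add: c_def p algebra_simps)
  also have "\<dots> = t *\<^sub>R ((w - \<mu> *\<^sub>R (a - b)) + z)" unfolding t\<mu> by (simp add: algebra_simps)
  finally have "dist a c = t * norm ((w - \<mu> *\<^sub>R (a - b)) + z)"
    using t by (simp add: dist_norm norm_minus_commute[of a c])
  also have "\<dots> < t * (2 * (1 + \<mu>))"
    using close norm_triangle_ineq[of "w - \<mu> *\<^sub>R (a - b)" z] \<mu>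
    by (intro mult_strict_left_mono) (auto simp: t_def)
  also have "\<dots> = 2" using \<mu> by (simp add: t_def field_simps)
  finally have "dist a c < 2" .
  moreover have "c \<in> closed_segment b p" using t by (auto simp: c_def in_segment)
  ultimately show "\<exists>c\<in>closed_segment b p. dist a c < 2" by blast
qed

lemma mem_minkowski_sum_wedge_D2:
  assumes "dist a b \<ge> 2"
  shows "p \<in> minkowski_sum (wedge a b) (D2 0) \<longleftrightarrow> p - a \<in> tangent_cone (a - b) + ball 0 2"
proof
  assume "p \<in> minkowski_sum (wedge a b) (D2 0)"
  then obtain x z where "x \<in> wedge a b" "z \<in> ball 0 2" "p - a = (x - a) + z"
    by (auto simp: minkowski_sum_def D2_def)
  then show "p - a \<in> tangent_cone (a - b) + ball 0 2"
    using wedge_iff_tangent_cone[OF assms] by (metis set_plus_intro)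
next
  assume "p - a \<in> tangent_cone (a - b) + ball 0 2"
  then obtain w z where "w \<in> tangent_cone (a - b)" "z \<in> ball 0 2" "p - a = w + z"
    by (auto elim: set_plus_elim)
  moreover have "a + w \<in> wedge a b" using \<open>w \<in> _\<close> wedge_iff_tangent_cone[OF assms] by simp
  moreover have "p = (a + w) + z" using \<open>p - a = w + z\<close> by (simp add: algebra_simps)
  ultimately show "p \<in> minkowski_sum (wedge a b) (D2 0)"
    unfolding minkowski_sum_def D2_def by blast
qed

lemma segment_near_point_iff_wedge:
  assumes "dist a b \<ge> 2"
  shows "(\<exists>c\<in>closed_segment b p. dist a c < 2) \<longleftrightarrow> p \<in> minkowski_sum (wedge a b) (D2 0)"
  using assms segment_near_point_iff_tangent_cone[of a b p]
  by (simp add: mem_minkowski_sum_wedge_D2 dist_norm)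

lemma minkowski_sum_uminus_D2:
  "minkowski_sum (uminus ` X) (D2 0) = uminus ` minkowski_sum X (D2 0)"
proof (intro equalityI subsetI)
  fix y assume "y \<in> minkowski_sum (uminus ` X) (D2 0)"
  then obtain x z where "x \<in> X" "z \<in> D2 0" and y: "y = - (x + - z)"
    by (auto simp: minkowski_sum_def)
  moreover have "- z \<in> D2 0" using \<open>z \<in> D2 0\<close> by (simp add: D2_def)
  ultimately have "x + - z \<in> minkowski_sum X (D2 0)" unfolding minkowski_sum_def by blast
  with y show "y \<in> uminus ` minkowski_sum X (D2 0)" by blast
next
  fix y assume "y \<in> uminus ` minkowski_sum X (D2 0)"
  then obtain x z where "x \<in> X" "z \<in> D2 0" "y = - x + - z"
    by (auto simp: minkowski_sum_def)
  moreover have "- z \<in> D2 0" using \<open>z \<in> D2 0\<close> by (simp add: D2_def)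
  ultimately show "y \<in> minkowski_sum (uminus ` X) (D2 0)" unfolding minkowski_sum_def by blast
qed

lemma translations_hippodrome_meets_D:
  assumes "dist a b \<ge> 2"
  shows "{v. D a \<inter> hippodrome b q v \<noteq> {}} = (\<lambda>x. x - q) ` minkowski_sum (wedge a b) (D2 0)"
proof -
  have "D a \<inter> hippodrome b q v \<noteq> {} \<longleftrightarrow> q + v \<in> minkowski_sum (wedge a b) (D2 0)" for v
    by (simp add: D_meets_hippodrome_iff segment_near_point_iff_wedge[OF assms])
  then show ?thesis by (force simp: image_iff algebra_simps)
qed

lemma translations_hippodrome_meets_translated_D:
  assumes "dist q p \<ge> 2"
  shows "{v. D (q + v) \<inter> hippodrome a p v \<noteq> {}}
    = (\<lambda>x. x + a) ` minkowski_sum (uminus ` wedge q p) (D2 0)"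
proof -
  have "D (q + v) \<inter> hippodrome a p v \<noteq> {} \<longleftrightarrow> a - v \<in> minkowski_sum (wedge q p) (D2 0)" for v
  proof -
    have "closed_segment a (p + v) = (\<lambda>x. v + x) ` closed_segment p (a - v)"
      using closed_segment_translation[of v "a - v" p]
      by (simp add: closed_segment_commute add.commute)
    then have "D (q + v) \<inter> hippodrome a p v \<noteq> {} \<longleftrightarrow> (\<exists>c\<in>closed_segment p (a - v). dist q c < 2)"
      by (simp add: D_meets_hippodrome_iff dist_norm)
    then show ?thesis by (simp add: segment_near_point_iff_wedge[OF assms])
  qed
  then show ?thesis by (force simp: minkowski_sum_uminus_D2 image_iff algebra_simps)
qed

theorem mainTheorem1:
  fixes S T :: "point set" and M :: "point \<Rightarrow> point" and AS BS :: point
  assumes "valid_config S" and "valid_config T" and "bij_betw M S T"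
    and "AS \<in> S" and "BS \<in> S" and "AS \<noteq> BS"
  shows "{v. D AS \<inter> hippodrome BS (M BS) v \<noteq> {}}
           = (\<lambda>x. x - M BS) ` minkowski_sum (wedge AS BS) (D2 0)
       \<and> {v. D (M BS + v) \<inter> hippodrome AS (M AS) v \<noteq> {}}
           = (\<lambda>x. x + AS) ` minkowski_sum (uminus ` wedge (M BS) (M AS)) (D2 0)"
proof -
  have "dist AS BS \<ge> 2" using assms(1,4-6) by (simp add: valid_config_def)
  moreover have "dist (M BS) (M AS) \<ge> 2"
  proof -
    have "M AS \<in> T" "M BS \<in> T" "M BS \<noteq> M AS"
      using assms(3-6) by (auto simp: bij_betw_def inj_on_def)
    then show ?thesis using assms(2) by (simp add: valid_config_def)
  qed
  ultimately show ?thesis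
    by (simp add: translations_hippodrome_meets_D translations_hippodrome_meets_translated_D)
qed

end
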